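(* Let $f$ be a light complex-valued harmonic function in $\mathbb{C}$. Let $R$ be a bounded connected component of $\mathbb{C}\setminus f^{-1}(f(S)\cup C(f,\infty))$ and let $\Omega$ be the connected component of $\mathbb{C}\setminus(f(S)\cup C(f,\infty))$ with $f(R)=\Omega$. Suppose that $w_0$ is an isolated point of $\partial\Omega$. If $f^{-1}(w_0)\cap\partial R\cap S=\varnothing$, then $w_0$ has exactly $\mathrm{Val}(f|_R,\Omega)$ distinct preimages in $\partial R$, and these preimages are isolated points of $\partial R$.
   Context: A function is light if the preimage of each point is empty or totally disconnected. Writing $f=u+iv$, $J_f=u_xv_y-u_yv_x$ and $S=\{z: J_f(z)=0\}$. $C(f,\infty)$ is the set of finite points $\zeta$ for which there is a sequence $(z_n)$ with $|z_n|\to\infty$ and $f(z_n)\to\zeta$. $\mathrm{Val}(f|_R,\Omega)=\sup_{w\in\Omega}\#\{z\in R: f(z)=w\}$. *)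

theory Defs
  imports "HOL-Analysis.Analysis" "HOL-Library.Extended_Nat"
begin

definition pdx :: "(complex \<Rightarrow> real) \<Rightarrow> complex \<Rightarrow> real" where
  "pdx u z = deriv (\<lambda>t::real. u (z + of_real t)) 0"

definition pdy :: "(complex \<Rightarrow> real) \<Rightarrow> complex \<Rightarrow> real" where
  "pdy u z = deriv (\<lambda>t::real. u (z + \<i> * of_real t)) 0"

definition harmonic_real :: "(complex \<Rightarrow> real) \<Rightarrow> bool" where
  "harmonic_real u \<longleftrightarrow>
     (\<forall>z. u differentiable (at z)) \<and>
     (\<forall>z. pdx u differentiable (at z)) \<and>
     (\<forall>z. pdy u differentiable (at z)) \<and>
     continuous_on UNIV (pdx (pdx u)) \<and> continuous_on UNIV (pdy (pdx u)) \<and>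
     continuous_on UNIV (pdx (pdy u)) \<and> continuous_on UNIV (pdy (pdy u)) \<and>
     (\<forall>z. pdx (pdx u) z + pdy (pdy u) z = 0)"

definition harmonic_complex :: "(complex \<Rightarrow> complex) \<Rightarrow> bool" where
  "harmonic_complex f \<longleftrightarrow> harmonic_real (\<lambda>z. Re (f z)) \<and> harmonic_real (\<lambda>z. Im (f z))"

definition totally_disconnected :: "'a::topological_space set \<Rightarrow> bool" where
  "totally_disconnected A \<longleftrightarrow> (\<forall>C. C \<subseteq> A \<and> connected C \<longrightarrow> (\<exists>a. C \<subseteq> {a}))"

definition light :: "('a::topological_space \<Rightarrow> 'b) \<Rightarrow> bool" where
  "light f \<longleftrightarrow> (\<forall>w. f -` {w} = {} \<or> totally_disconnected (f -` {w}))"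

definition jacobian :: "(complex \<Rightarrow> complex) \<Rightarrow> complex \<Rightarrow> real" where
  "jacobian f z = pdx (\<lambda>z. Re (f z)) z * pdy (\<lambda>z. Im (f z)) z
                - pdy (\<lambda>z. Re (f z)) z * pdx (\<lambda>z. Im (f z)) z"

definition critset :: "(complex \<Rightarrow> complex) \<Rightarrow> complex set" where
  "critset f = {z. jacobian f z = 0}"

definition cluster_inf :: "(complex \<Rightarrow> complex) \<Rightarrow> complex set" where
  "cluster_inf f = {\<zeta>. \<exists>zs::nat \<Rightarrow> complex.
      filterlim (\<lambda>n. norm (zs n)) at_top sequentially \<and> (\<lambda>n. f (zs n)) \<longlonglongrightarrow> \<zeta>}"

definition ecount :: "'a set \<Rightarrow> enat" where
  "ecount A = (if finite A then enat (card A) else \<infinity>)"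

definition Val :: "('a \<Rightarrow> 'b) \<Rightarrow> 'a set \<Rightarrow> 'b set \<Rightarrow> enat" where
  "Val f R \<Omega> = (SUP w\<in>\<Omega>. ecount {z\<in>R. f z = w})"

end

(* Off the critical set the Jacobian of f is nonzero, so f is locally injective there, and by
   invariance of domain it is open near such points. Over the component Omega of the complement of
   the closed set f(S) \<union> C(f,\<infinity>), the number of preimages in the bounded component R is then
   locally constant, hence constant, and equal to Val(f|_R, Omega).
   A punctured disc D around the isolated boundary point w0 lies in Omega. Near a preimage y of w0
   on the boundary of R, f is injective and maps a punctured disc around y into D, so that punctured
   disc lies in R: y is isolated in the boundary of R. Choosing small disjoint injectivity discs
   around the finitely many such y, every w in D close to w0 has exactly one preimage in each disc
   and, by compactness of the closure of R, no other preimage in R. *)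

theory Submission
  imports Defs
begin

section \<open>Partial derivatives and the inverse function theorem in the plane\<close>

lemma deriv_along_line:
  fixes u :: "'a::real_normed_vector \<Rightarrow> real"
  assumes "(u has_derivative D) (at z)"
  shows "deriv (\<lambda>t. u (z + t *\<^sub>R v)) 0 = D v"
proof -
  have "((\<lambda>t. z + t *\<^sub>R v) has_derivative (\<lambda>t. t *\<^sub>R v)) (at 0)"
    by (auto intro!: derivative_eq_intros)
  from has_derivative_compose[OF this] assms
  have "((\<lambda>t. u (z + t *\<^sub>R v)) has_derivative (\<lambda>t. D (t *\<^sub>R v))) (at 0)"
    by simp
  moreover have "(\<lambda>t. D (t *\<^sub>R v)) = (*) (D v)"
    using linear_scale[OF has_derivative_linear[OF assms]] by (simp add: fun_eq_iff)
  ultimately show ?thesis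
    by (intro DERIV_imp_deriv) (simp only: has_field_derivative_def)
qed

lemma has_derivative_partials:
  fixes u :: "complex \<Rightarrow> real"
  assumes "u differentiable (at z)"
  shows "(u has_derivative (\<lambda>h. Re h * pdx u z + Im h * pdy u z)) (at z)"
proof -
  obtain D where D: "(u has_derivative D) (at z)"
    using assms unfolding differentiable_def by blast
  have pdx: "pdx u z = D 1"
    using deriv_along_line[OF D, of 1] by (simp add: pdx_def scaleR_conv_of_real)
  have pdy: "pdy u z = D \<i>"
    using deriv_along_line[OF D, of \<i>] by (simp add: pdy_def scaleR_conv_of_real mult.commute)
  have lin: "D h = Re h * D 1 + Im h * D \<i>" for h
  proof -
    have "h = Re h *\<^sub>R 1 + Im h *\<^sub>R \<i>"
      by (simp add: complex_eq_iff)
    then have "D h = D (Re h *\<^sub>R 1) + D (Im h *\<^sub>R \<i>)"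
      using linear_add[OF has_derivative_linear[OF D]] by metis
    then show ?thesis
      using linear_scale[OF has_derivative_linear[OF D]] by simp
  qed
  have "D = (\<lambda>h. Re h * pdx u z + Im h * pdy u z)"
    unfolding pdx pdy using lin by (rule ext)
  with D show ?thesis
    by simp
qed

definition mat2 :: "real \<Rightarrow> real \<Rightarrow> real \<Rightarrow> real \<Rightarrow> complex \<Rightarrow> complex" where
  "mat2 a b c d h = Complex (Re h * a + Im h * b) (Re h * c + Im h * d)"

lemma linear_mat2: "linear (mat2 a b c d)"
  by (rule linearI) (simp_all add: mat2_def complex_eq_iff algebra_simps)

lemma mat2_diff: "mat2 a b c d h - mat2 a' b' c' d' h = mat2 (a - a') (b - b') (c - c') (d - d') h"
  by (simp add: mat2_def complex_eq_iff algebra_simps)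

lemma norm_mat2_le: "norm (mat2 a b c d h) \<le> (\<bar>a\<bar> + \<bar>b\<bar> + \<bar>c\<bar> + \<bar>d\<bar>) * norm h"
proof -
  have "norm (mat2 a b c d h) \<le> \<bar>Re h * a + Im h * b\<bar> + \<bar>Re h * c + Im h * d\<bar>"
    using cmod_le[of "mat2 a b c d h"] by (simp add: mat2_def)
  also have "\<dots> \<le> (\<bar>Re h\<bar> * \<bar>a\<bar> + \<bar>Im h\<bar> * \<bar>b\<bar>) + (\<bar>Re h\<bar> * \<bar>c\<bar> + \<bar>Im h\<bar> * \<bar>d\<bar>)"
    by (intro add_mono) (auto simp: abs_mult intro: order.trans[OF abs_triangle_ineq])
  also have "\<dots> \<le> (norm h * \<bar>a\<bar> + norm h * \<bar>b\<bar>) + (norm h * \<bar>c\<bar> + norm h * \<bar>d\<bar>)"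
    by (intro add_mono mult_right_mono) (simp_all add: abs_Re_le_cmod abs_Im_le_cmod)
  finally show ?thesis
    by (simp add: algebra_simps)
qed

lemma onorm_mat2_le: "onorm (mat2 a b c d) \<le> \<bar>a\<bar> + \<bar>b\<bar> + \<bar>c\<bar> + \<bar>d\<bar>"
  by (rule onorm_le) (rule norm_mat2_le)

lemma mat2_inverse:
  assumes "a * d - b * c \<noteq> 0"
  shows "mat2 (d / (a * d - b * c)) (- b / (a * d - b * c)) (- c / (a * d - b * c)) (a / (a * d - b * c))
           \<circ> mat2 a b c d = id"
proof
  fix h
  show "(mat2 (d / (a * d - b * c)) (- b / (a * d - b * c)) (- c / (a * d - b * c)) (a / (a * d - b * c))
           \<circ> mat2 a b c d) h = id h"
    using assms by (simp add: mat2_def complex_eq_iff divide_simps) algebra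
qed

definition plane_differential :: "(complex \<Rightarrow> complex) \<Rightarrow> complex \<Rightarrow> complex \<Rightarrow> complex" where
  "plane_differential f z =
     mat2 (pdx (\<lambda>z. Re (f z)) z) (pdy (\<lambda>z. Re (f z)) z) (pdx (\<lambda>z. Im (f z)) z) (pdy (\<lambda>z. Im (f z)) z)"

lemma has_derivative_plane_differential:
  assumes "(\<lambda>z. Re (f z)) differentiable (at z)" "(\<lambda>z. Im (f z)) differentiable (at z)"
  shows "(f has_derivative plane_differential f z) (at z)"
  unfolding has_derivative_componentwise_within[of f] plane_differential_def mat2_def
  using has_derivative_partials[OF assms(1)] has_derivative_partials[OF assms(2)]
  by (auto simp: Basis_complex_def)

lemma inj_on_ball_if_jacobian_nonzero:
  fixes f :: "complex \<Rightarrow> complex"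
  assumes diff: "\<And>z. (\<lambda>z. Re (f z)) differentiable (at z)" "\<And>z. (\<lambda>z. Im (f z)) differentiable (at z)"
    and cont: "isCont (pdx (\<lambda>z. Re (f z))) a" "isCont (pdy (\<lambda>z. Re (f z))) a"
      "isCont (pdx (\<lambda>z. Im (f z))) a" "isCont (pdy (\<lambda>z. Im (f z))) a"
    and "jacobian f a \<noteq> 0"
  obtains r where "r > 0" "inj_on f (ball a r)"
proof -
  define p q r s where "p = pdx (\<lambda>z. Re (f z))" and "q = pdy (\<lambda>z. Re (f z))"
    and "r = pdx (\<lambda>z. Im (f z))" and "s = pdy (\<lambda>z. Im (f z))"
  define \<Delta> where "\<Delta> = p a * s a - q a * r a"
  have "\<Delta> \<noteq> 0"
    using \<open>jacobian f a \<noteq> 0\<close> by (simp add: \<Delta>_def p_def q_def r_def s_def jacobian_def)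
  define c where "c = (\<lambda>x. \<bar>p x - p a\<bar> + \<bar>q x - q a\<bar> + \<bar>r x - r a\<bar> + \<bar>s x - s a\<bar>)"
  have "isCont c a"
    unfolding c_def p_def q_def r_def s_def using cont by (intro continuous_intros)
  moreover have "c a = 0"
    by (simp add: c_def)
  ultimately have small: "\<exists>d>0. \<forall>x. dist a x < d \<longrightarrow> onorm (\<lambda>v. plane_differential f x v - plane_differential f a v) < e"
    if "e > 0" for e
  proof -
    obtain d where "d > 0" and d: "\<And>x. dist x a < d \<Longrightarrow> \<bar>c x\<bar> < e"
      using \<open>isCont c a\<close> \<open>e > 0\<close> \<open>c a = 0\<close> unfolding continuous_at_eps_delta by fastforce
    have "onorm (\<lambda>v. plane_differential f x v - plane_differential f a v) \<le> c x" for x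
      using onorm_mat2_le unfolding plane_differential_def mat2_diff c_def p_def q_def r_def s_def .
    with d \<open>d > 0\<close> show ?thesis
      by (metis abs_less_iff dist_commute order.strict_trans1)
  qed
  obtain \<rho> where "\<rho> > 0" "inj_on f (ball a \<rho>)"
  proof (rule has_derivative_locally_injective[OF UNIV_I open_UNIV _ _ _ small])
    show "bounded_linear (mat2 (s a / \<Delta>) (- q a / \<Delta>) (- r a / \<Delta>) (p a / \<Delta>))"
      using linear_mat2 linear_conv_bounded_linear by blast
    show "mat2 (s a / \<Delta>) (- q a / \<Delta>) (- r a / \<Delta>) (p a / \<Delta>) \<circ> plane_differential f a = id"
      using mat2_inverse[of "p a" "s a" "q a" "r a"] \<open>\<Delta> \<noteq> 0\<close>
      unfolding plane_differential_def \<Delta>_def p_def q_def r_def s_def by simp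
    show "(f has_derivative plane_differential f x) (at x)" for x
      using has_derivative_plane_differential diff by blast
  qed
  then show ?thesis
    using that by blast
qed

section \<open>Harmonic maps and the cluster set at infinity\<close>

lemma harmonic_complex_imp_C1:
  assumes "harmonic_complex f"
  shows "(\<lambda>z. Re (f z)) differentiable (at z)" "(\<lambda>z. Im (f z)) differentiable (at z)"
    and "isCont (pdx (\<lambda>z. Re (f z))) z" "isCont (pdy (\<lambda>z. Re (f z))) z"
    and "isCont (pdx (\<lambda>z. Im (f z))) z" "isCont (pdy (\<lambda>z. Im (f z))) z"
  using assms unfolding harmonic_complex_def harmonic_real_def
  by (auto intro: differentiable_imp_continuous_within)

lemma continuous_on_harmonic_complex:
  assumes "harmonic_complex f"
  shows "continuous_on UNIV f"
proof -
  have "f differentiable (at z)" for z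
    using has_derivative_plane_differential[OF harmonic_complex_imp_C1(1,2)[OF assms]]
    unfolding differentiable_def by blast
  then show ?thesis
    by (simp add: continuous_at_imp_continuous_on differentiable_imp_continuous_within)
qed

lemma closed_critset:
  assumes "harmonic_complex f"
  shows "closed (critset f)"
proof -
  have "continuous_on UNIV (jacobian f)"
    unfolding jacobian_def using harmonic_complex_imp_C1(3-6)[OF assms]
    by (intro continuous_at_imp_continuous_on ballI continuous_intros)
  then show ?thesis
    using continuous_closed_preimage_constant[of UNIV "jacobian f" 0] by (simp add: critset_def)
qed

lemma harmonic_complex_locally_injective:
  assumes "harmonic_complex f" "z \<notin> critset f"
  shows "\<exists>r>0. inj_on f (ball z r)"
  using inj_on_ball_if_jacobian_nonzero[OF harmonic_complex_imp_C1[OF assms(1)]] assms(2)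
  by (metis critset_def mem_Collect_eq)

lemma cluster_inf_eq_Inter_closure:
  "cluster_inf f = (\<Inter>n::nat. closure (f ` {z. real n < norm z}))"
proof (intro equalityI subsetI)
  fix \<zeta> assume "\<zeta> \<in> cluster_inf f"
  then obtain zs where zs: "filterlim (\<lambda>k. norm (zs k)) at_top sequentially" "(\<lambda>k. f (zs k)) \<longlonglongrightarrow> \<zeta>"
    unfolding cluster_inf_def by blast
  show "\<zeta> \<in> (\<Inter>n::nat. closure (f ` {z. real n < norm z}))"
  proof
    fix n :: nat
    have "\<forall>\<^sub>F k in sequentially. real n < norm (zs k)"
      using zs(1) by (simp add: filterlim_at_top_dense)
    then have "\<forall>\<^sub>F k in sequentially. f (zs k) \<in> closure (f ` {z. real n < norm z})"
      by eventually_elim (auto intro: closure_subset[THEN subsetD])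
    then show "\<zeta> \<in> closure (f ` {z. real n < norm z})"
      using Lim_in_closed_set[OF closed_closure _ _ zs(2)] by simp
  qed
next
  fix \<zeta> assume \<zeta>: "\<zeta> \<in> (\<Inter>n::nat. closure (f ` {z. real n < norm z}))"
  have "\<exists>z. real n < norm z \<and> dist (f z) \<zeta> < inverse (real n + 1)" for n
  proof -
    have "\<zeta> \<in> closure (f ` {z. real n < norm z})"
      using \<zeta> by blast
    moreover have "inverse (real n + 1) > 0"
      by simp
    ultimately obtain y where "y \<in> f ` {z. real n < norm z}" "dist y \<zeta> < inverse (real n + 1)"
      unfolding closure_approachable by blast
    then show ?thesis
      by blast
  qed
  then obtain zs where zs: "\<And>n. real n < norm (zs n)" "\<And>n. dist (f (zs n)) \<zeta> < inverse (real n + 1)"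
    by metis
  have "filterlim (\<lambda>n. norm (zs n)) at_top sequentially"
    by (rule filterlim_at_top_mono[OF filterlim_real_sequentially])
      (intro always_eventually allI less_imp_le zs(1))
  moreover have "(\<lambda>n. f (zs n)) \<longlonglongrightarrow> \<zeta>"
  proof -
    have "(\<lambda>n. inverse (real n + 1)) \<longlonglongrightarrow> 0"
      using LIMSEQ_inverse_real_of_nat by (simp add: add.commute)
    then have "(\<lambda>n. dist (f (zs n)) \<zeta>) \<longlonglongrightarrow> 0"
      by (rule Lim_null_comparison[rotated]) (simp add: always_eventually less_imp_le zs(2))
    then show ?thesis
      using tendsto_dist_iff by blast
  qed
  ultimately show "\<zeta> \<in> cluster_inf f"
    unfolding cluster_inf_def by blast
qed

lemma closed_image_Un_cluster_inf:
  assumes "continuous_on UNIV f" "closed S"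
  shows "closed (f ` S \<union> cluster_inf f)"
proof -
  define E where "E n = closure (f ` {z. real n < norm z})" for n :: nat
  have "f ` S \<union> cluster_inf f = (\<Inter>n. f ` (S \<inter> cball 0 (real n)) \<union> E n)"
  proof (intro equalityI subsetI)
    fix w assume w: "w \<in> f ` S \<union> cluster_inf f"
    show "w \<in> (\<Inter>n. f ` (S \<inter> cball 0 (real n)) \<union> E n)"
    proof
      fix n
      show "w \<in> f ` (S \<inter> cball 0 (real n)) \<union> E n"
      proof (cases "w \<in> cluster_inf f")
        case True
        then show ?thesis
          unfolding cluster_inf_eq_Inter_closure E_def by blast
      next
        case False
        then obtain z where "z \<in> S" "w = f z"
          using w by blast
        then show ?thesis
          using closure_subset[of "f ` {z. real n < norm z}"] unfolding E_def
          by (cases "norm z \<le> real n") (auto simp: not_le)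
      qed
    qed
  next
    fix w assume w: "w \<in> (\<Inter>n. f ` (S \<inter> cball 0 (real n)) \<union> E n)"
    show "w \<in> f ` S \<union> cluster_inf f"
    proof (cases "\<forall>n. w \<in> E n")
      case True
      then show ?thesis
        unfolding cluster_inf_eq_Inter_closure E_def by blast
    next
      case False
      then obtain n where "w \<notin> E n"
        by blast
      with w have "w \<in> f ` (S \<inter> cball 0 (real n))"
        by blast
      then show ?thesis
        by blast
    qed
  qed
  moreover have "closed (f ` (S \<inter> cball 0 (real n)) \<union> E n)" for n
    unfolding E_def
    by (intro closed_Un closed_closure compact_imp_closed compact_continuous_image
        continuous_on_subset[OF assms(1)] closed_Int_compact assms(2) compact_cball subset_UNIV)
  ultimately show ?thesis
    by (simp add: closed_INT)
qed

section \<open>Counting preimages of locally injective maps\<close>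

lemma finite_fibre_if_locally_injective:
  fixes f :: "'a::metric_space \<Rightarrow> 'b::t1_space"
  assumes "continuous_on K f" "compact K"
    and "\<And>y. y \<in> K \<Longrightarrow> f y = w \<Longrightarrow> \<exists>r>0. inj_on f (ball y r)"
  shows "finite (f -` {w} \<inter> K)"
proof -
  define Y where "Y = f -` {w} \<inter> K"
  have "Y = K \<inter> {x \<in> K. f x = w}"
    by (auto simp: Y_def)
  then have "compact Y"
    using assms(1,2) by (simp add: compact_Int_closed compact_imp_closed continuous_closed_preimage_constant)
  moreover have "discrete Y"
  proof (rule discreteI)
    fix y assume "y \<in> Y"
    then obtain r where "r > 0" "inj_on f (ball y r)"
      using assms(3) by (auto simp: Y_def)
    then have "ball y r \<inter> Y = {y}"
      using \<open>y \<in> Y\<close> by (auto simp: Y_def dest: inj_onD)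
    then show "y isolated_in Y"
      by (rule isolated_inI[OF \<open>y \<in> Y\<close> open_ball])
  qed
  ultimately show ?thesis
    using discrete_compact_finite_iff Y_def by blast
qed

lemma finite_disjoint_balls:
  fixes Y :: "'a::metric_space set"
  assumes "finite Y" "\<And>y. y \<in> Y \<Longrightarrow> 0 < rad y"
  obtains \<rho> where "\<rho> > 0" "\<And>y. y \<in> Y \<Longrightarrow> \<rho> \<le> rad y" "disjoint_family_on (\<lambda>y. ball y \<rho>) Y"
proof
  define D where "D = insert 1 (rad ` Y \<union> (\<lambda>(y, y'). dist y y' / 2) ` {(y, y') \<in> Y \<times> Y. y \<noteq> y'})"
  have "finite D"
    using assms(1) by (auto simp: D_def intro!: finite_imageI finite_subset[OF _ finite_cartesian_product[OF assms(1) assms(1)]])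
  show "Min D > 0"
    using \<open>finite D\<close> assms(2) by (auto simp: D_def Min_gr_iff)
  show "Min D \<le> rad y" if "y \<in> Y" for y
    using \<open>finite D\<close> that by (intro Min_le) (auto simp: D_def)
  show "disjoint_family_on (\<lambda>y. ball y (Min D)) Y"
    unfolding disjoint_family_on_def
  proof (intro ballI impI equals0I)
    fix y y' x assume "y \<in> Y" "y' \<in> Y" "y \<noteq> y'" "x \<in> ball y (Min D) \<inter> ball y' (Min D)"
    then have "dist y x < Min D" "dist y' x < Min D"
      by auto
    then have "dist y y' < Min D + Min D"
      using dist_triangle_less_add by (metis dist_commute)
    moreover have "Min D \<le> dist y y' / 2"
      using \<open>finite D\<close> \<open>y \<in> Y\<close> \<open>y' \<in> Y\<close> \<open>y \<noteq> y'\<close> by (intro Min_le) (auto simp: D_def)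
    ultimately show False
      by linarith
  qed
qed

lemma card_fibre_UN_inj_on:
  assumes "finite Y" "disjoint_family_on V Y"
    and "\<And>y. y \<in> Y \<Longrightarrow> inj_on f (V y)" "\<And>y. y \<in> Y \<Longrightarrow> w \<in> f ` V y"
  shows "finite (\<Union>y\<in>Y. f -` {w} \<inter> V y)" "card (\<Union>y\<in>Y. f -` {w} \<inter> V y) = card Y"
proof -
  have single: "\<exists>x. f -` {w} \<inter> V y = {x}" if y: "y \<in> Y" for y
  proof -
    obtain x where "x \<in> V y" "f x = w"
      using assms(4)[OF y] by blast
    then have "f -` {w} \<inter> V y = {x}"
      using assms(3)[OF y] by (auto dest: inj_onD)
    then show ?thesis
      by blast
  qed
  then have fin: "finite (f -` {w} \<inter> V y)" and one: "card (f -` {w} \<inter> V y) = 1" if "y \<in> Y" for y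
    using that by force+
  show "finite (\<Union>y\<in>Y. f -` {w} \<inter> V y)"
    using assms(1) fin by blast
  have "disjoint_family_on (\<lambda>y. f -` {w} \<inter> V y) Y"
    using assms(2) unfolding disjoint_family_on_def by blast
  then have "card (\<Union>y\<in>Y. f -` {w} \<inter> V y) = (\<Sum>y\<in>Y. card (f -` {w} \<inter> V y))"
    using fin assms(1) by (rule card_UN_disjoint')
  also have "\<dots> = (\<Sum>y\<in>Y. 1)"
    using one by (rule sum.cong[OF refl])
  finally show "card (\<Union>y\<in>Y. f -` {w} \<inter> V y) = card Y"
    by simp
qed

lemma eventually_fibre_subset_open:
  fixes f :: "'a::topological_space \<Rightarrow> 'b::t2_space"
  assumes "continuous_on K f" "compact K" "open U" "f -` {w} \<inter> K \<subseteq> U"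
  shows "\<forall>\<^sub>F w' in nhds w. f -` {w'} \<inter> K \<subseteq> U"
proof -
  have "compact (f ` (K - U))"
    using assms(1-3) by (intro compact_continuous_image compact_diff) (auto intro: continuous_on_subset)
  moreover have "w \<notin> f ` (K - U)"
    using assms(4) by auto
  ultimately have "\<forall>\<^sub>F w' in nhds w. w' \<in> - f ` (K - U)"
    by (intro eventually_nhds_in_open) (auto intro: compact_imp_closed)
  then show ?thesis
    by eventually_elim auto
qed

lemma eventually_nhds_in_image_ball:
  fixes f :: "'a::euclidean_space \<Rightarrow> 'a"
  assumes "continuous_on (ball y r) f" "inj_on f (ball y r)" "r > 0"
  shows "\<forall>\<^sub>F w' in nhds (f y). w' \<in> f ` ball y r"
  using invariance_of_domain[OF assms(1) open_ball assms(2)] assms(3)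
  by (intro eventually_nhds_in_open) auto

lemma eventually_card_fibre_eq:
  fixes f :: "'a::euclidean_space \<Rightarrow> 'a"
  assumes cont: "continuous_on UNIV f" and "compact K" "T \<subseteq> K"
    and loc: "\<And>y. y \<in> K \<Longrightarrow> f y = w \<Longrightarrow> \<exists>r>0. inj_on f (ball y r) \<and> ball y r - {y} \<subseteq> T"
  shows "\<forall>\<^sub>F w' in at w. finite (f -` {w'} \<inter> T) \<and> card (f -` {w'} \<inter> T) = card (f -` {w} \<inter> K)"
proof -
  define Y where "Y = f -` {w} \<inter> K"
  have "finite Y"
    unfolding Y_def using continuous_on_subset[OF cont subset_UNIV] \<open>compact K\<close>
    by (rule finite_fibre_if_locally_injective) (use loc in blast)
  obtain rad where rad: "\<And>y. y \<in> Y \<Longrightarrow> 0 < rad y \<and> inj_on f (ball y (rad y)) \<and> ball y (rad y) - {y} \<subseteq> T"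
    using loc unfolding Y_def by (metis IntE vimage_singleton_eq)
  obtain \<rho> where "\<rho> > 0" and \<rho>: "\<And>y. y \<in> Y \<Longrightarrow> \<rho> \<le> rad y"
    and disj: "disjoint_family_on (\<lambda>y. ball y \<rho>) Y"
    using finite_disjoint_balls[OF \<open>finite Y\<close>, of rad] rad by blast
  have inj: "inj_on f (ball y \<rho>)" and punct: "ball y \<rho> - {y} \<subseteq> T" if "y \<in> Y" for y
    using rad[OF that] subset_ball[OF \<rho>[OF that]] by (auto intro: inj_on_subset)
  have "\<forall>\<^sub>F w' in nhds w. \<forall>y\<in>Y. w' \<in> f ` ball y \<rho>"
  proof (rule eventually_ball_finite[OF \<open>finite Y\<close>], intro ballI)
    fix y assume "y \<in> Y"
    then show "\<forall>\<^sub>F w' in nhds w. w' \<in> f ` ball y \<rho>"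
      using eventually_nhds_in_image_ball[OF continuous_on_subset[OF cont subset_UNIV] inj \<open>\<rho> > 0\<close>]
      by (simp add: Y_def)
  qed
  moreover have "\<forall>\<^sub>F w' in nhds w. f -` {w'} \<inter> K \<subseteq> (\<Union>y\<in>Y. ball y \<rho>)"
    using continuous_on_subset[OF cont subset_UNIV] \<open>compact K\<close>
    by (rule eventually_fibre_subset_open) (use \<open>\<rho> > 0\<close> in \<open>auto simp: Y_def\<close>)
  ultimately have "\<forall>\<^sub>F w' in nhds w. w' \<noteq> w \<longrightarrow>
      finite (f -` {w'} \<inter> T) \<and> card (f -` {w'} \<inter> T) = card Y"
  proof eventually_elim
    case (elim w')
    show ?case
    proof
      assume "w' \<noteq> w"
      with elim(2) \<open>T \<subseteq> K\<close> punct have "f -` {w'} \<inter> T = (\<Union>y\<in>Y. f -` {w'} \<inter> ball y \<rho>)"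
        by (auto simp: Y_def)
      then show "finite (f -` {w'} \<inter> T) \<and> card (f -` {w'} \<inter> T) = card Y"
        using card_fibre_UN_inj_on[OF \<open>finite Y\<close> disj inj elim(1)[rule_format]] by simp
    qed
  qed
  then show ?thesis
    unfolding eventually_at_filter Y_def by (rule eventually_mono) blast
qed

lemma closure_component_Int_open:
  fixes G :: "'a::real_normed_vector set"
  assumes "open G" "R \<in> components G"
  shows "closure R \<inter> G = R"
proof
  show "R \<subseteq> closure R \<inter> G"
    using closure_subset in_components_subset[OF assms(2)] by blast
  have "frontier R \<inter> G = {}"
    using frontier_of_components_subset[OF assms(2)] \<open>open G\<close> by (auto simp: frontier_def interior_open)
  then show "closure R \<inter> G \<subseteq> R"
    using open_components[OF assms] by (auto simp: frontier_def interior_open)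
qed

lemma punctured_ball_subset_if_isolated_in_frontier:
  fixes \<Omega> :: "'a::euclidean_space set"
  assumes "2 \<le> DIM('a)" "open \<Omega>" "w \<in> frontier \<Omega>" "ball w e \<inter> frontier \<Omega> = {w}"
  shows "ball w e - {w} \<subseteq> \<Omega>"
proof (rule ccontr)
  assume not_sub: "\<not> ball w e - {w} \<subseteq> \<Omega>"
  have "w \<notin> \<Omega>" "w \<in> closure \<Omega>"
    using assms(2,3) by (simp_all add: frontier_def interior_open)
  moreover have "e > 0"
    using assms(4) by auto
  ultimately obtain y where "y \<in> \<Omega>" "dist y w < e" "y \<noteq> w"
    unfolding closure_approachable by blast
  then have "(ball w e - {w}) \<inter> \<Omega> \<noteq> {}"
    by (auto simp: dist_commute)
  then have "(ball w e - {w}) \<inter> frontier \<Omega> \<noteq> {}"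
    using connected_Int_frontier[OF connected_punctured_ball[OF assms(1)]] not_sub by blast
  then show False
    using assms(4) by blast
qed

lemma punctured_ball_subset_component:
  fixes f :: "'a::euclidean_space \<Rightarrow> 'b::metric_space"
  assumes "2 \<le> DIM('a)" "isCont f y"
    and R: "R \<in> components (- f -` B)" "y \<in> closure R"
    and "e > 0" "ball (f y) e - {f y} \<subseteq> - B" and "r0 > 0" "inj_on f (ball y r0)"
  obtains r where "r > 0" "inj_on f (ball y r)" "ball y r - {y} \<subseteq> R"
proof -
  obtain r1 where "r1 > 0" and r1: "\<And>x. dist x y < r1 \<Longrightarrow> dist (f x) (f y) < e"
    using \<open>isCont f y\<close> \<open>e > 0\<close> unfolding continuous_at_eps_delta by blast
  define r where "r = min r0 r1"
  have "r > 0" and inj: "inj_on f (ball y r)"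
    using \<open>r0 > 0\<close> \<open>r1 > 0\<close> assms(8) by (auto simp: r_def intro: inj_on_subset)
  have punct_sub: "ball y r - {y} \<subseteq> - f -` B"
  proof
    fix x assume x: "x \<in> ball y r - {y}"
    then have "f x \<noteq> f y"
      using inj \<open>r > 0\<close> by (auto dest: inj_onD)
    moreover have "dist (f x) (f y) < e"
      using x r1 by (auto simp: r_def dist_commute)
    ultimately show "x \<in> - f -` B"
      using assms(6) by (auto simp: dist_commute)
  qed
  obtain x where "x \<in> R" "dist x y < r"
    using \<open>y \<in> closure R\<close> \<open>r > 0\<close> unfolding closure_approachable by blast
  have "ball y r - {y} \<subseteq> R"
  proof (cases "y \<in> R")
    case True
    then have "ball y r \<subseteq> - f -` B"
      using punct_sub in_components_subset[OF R(1)] by blast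
    moreover have "R \<inter> ball y r \<noteq> {}"
      using True \<open>r > 0\<close> by auto
    ultimately have "ball y r \<subseteq> R"
      using components_maximal[OF R(1) connected_ball] by blast
    then show ?thesis
      by blast
  next
    case False
    then have "R \<inter> (ball y r - {y}) \<noteq> {}"
      using \<open>x \<in> R\<close> \<open>dist x y < r\<close> by (auto simp: dist_commute)
    then show ?thesis
      using components_maximal[OF R(1) connected_punctured_ball[OF assms(1)] punct_sub] by blast
  qed
  with \<open>r > 0\<close> inj show ?thesis
    using that by blast
qed

lemma open_Compl_vimage_closed:
  assumes "continuous_on UNIV f" "closed B"
  shows "open (- f -` B)"
  using closed_vimage[OF assms(2,1)] by (rule open_Compl)

lemma constant_on_if_eventually_eq_nhds:
  assumes "connected S" "\<And>a. a \<in> S \<Longrightarrow> \<forall>\<^sub>F x in nhds a. g x = g a"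
  shows "g constant_on S"
proof (rule locally_constant_imp_constant[OF assms(1)])
  fix a assume "a \<in> S"
  then obtain U where "open U" "a \<in> U" "\<forall>x\<in>U. g x = g a"
    using assms(2) unfolding eventually_nhds by blast
  moreover have "openin (top_of_set S) (S \<inter> U)"
    using \<open>open U\<close> by (rule openin_open_Int)
  ultimately show "\<exists>T. openin (top_of_set S) T \<and> a \<in> T \<and> (\<forall>x\<in>T. g x = g a)"
    using \<open>a \<in> S\<close> by blast
qed

lemma card_fibre_constant_on_component:
  fixes f :: "'a::euclidean_space \<Rightarrow> 'a"
  assumes cont: "continuous_on UNIV f" and "closed B"
    and locinj: "\<And>x. f x \<notin> B \<Longrightarrow> \<exists>r>0. inj_on f (ball x r)"
    and R: "R \<in> components (- f -` B)" "bounded R"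
    and \<Omega>: "\<Omega> \<in> components (- B)"
  obtains N where "\<And>w. w \<in> \<Omega> \<Longrightarrow> finite (f -` {w} \<inter> R) \<and> card (f -` {w} \<inter> R) = N"
proof -
  have "open (- f -` B)"
    using cont \<open>closed B\<close> by (rule open_Compl_vimage_closed)
  have in_R: "y \<in> R" if y: "y \<in> closure R" "f y \<in> \<Omega>" for y
  proof -
    have "y \<in> - f -` B"
      using y(2) in_components_subset[OF \<Omega>] by auto
    then show ?thesis
      using closure_component_Int_open[OF \<open>open (- f -` B)\<close> R(1)] y(1) by (metis IntI)
  qed
  have loc: "\<exists>r>0. inj_on f (ball y r) \<and> ball y r - {y} \<subseteq> R"
    if y: "y \<in> closure R" "f y \<in> \<Omega>" for y
  proof -
    obtain r1 where "r1 > 0" "inj_on f (ball y r1)"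
      using locinj y(2) in_components_subset[OF \<Omega>] by blast
    moreover obtain r2 where "r2 > 0" "ball y r2 \<subseteq> R"
      using in_R[OF y] open_components[OF \<open>open (- f -` B)\<close> R(1)] open_contains_ball by blast
    ultimately show ?thesis
      by (intro exI[of _ "min r1 r2"]) (auto intro: inj_on_subset)
  qed
  have fibre: "f -` {w} \<inter> closure R = f -` {w} \<inter> R" if "w \<in> \<Omega>" for w
    using that closure_subset[of R] by (auto intro: in_R)
  have "(\<lambda>w. card (f -` {w} \<inter> R)) constant_on \<Omega>"
  proof (rule constant_on_if_eventually_eq_nhds)
    show "connected \<Omega>"
      by (rule in_components_connected[OF \<Omega>])
    fix w assume "w \<in> \<Omega>"
    have "\<forall>\<^sub>F w' in at w. finite (f -` {w'} \<inter> R) \<and> card (f -` {w'} \<inter> R) = card (f -` {w} \<inter> closure R)"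
      using cont compact_closure[THEN iffD2, OF R(2)] closure_subset
      by (rule eventually_card_fibre_eq) (use loc \<open>w \<in> \<Omega>\<close> in blast)
    then show "\<forall>\<^sub>F w' in nhds w. card (f -` {w'} \<inter> R) = card (f -` {w} \<inter> R)"
      unfolding eventually_at_filter fibre[OF \<open>w \<in> \<Omega>\<close>] by (rule eventually_mono) auto
  qed
  then obtain N where "\<And>w. w \<in> \<Omega> \<Longrightarrow> card (f -` {w} \<inter> R) = N"
    unfolding constant_on_def by blast
  moreover have "finite (f -` {w} \<inter> R)" if "w \<in> \<Omega>" for w
    using continuous_on_subset[OF cont subset_UNIV] compact_closure[THEN iffD2, OF R(2)]
    unfolding fibre[OF that, symmetric] by (rule finite_fibre_if_locally_injective) (use loc that in blast)
  ultimately show ?thesis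
    using that by blast
qed

lemma frontier_fibre_locally_in_component:
  fixes f :: "'a::euclidean_space \<Rightarrow> 'a"
  assumes "2 \<le> DIM('a)" and cont: "continuous_on UNIV f" and "closed B"
    and R: "R \<in> components (- f -` B)"
    and \<Omega>: "\<Omega> \<in> components (- B)" "f ` R = \<Omega>"
    and w0: "w0 \<in> frontier \<Omega>" "ball w0 e \<inter> frontier \<Omega> = {w0}"
    and locinj0: "\<And>y. y \<in> frontier R \<Longrightarrow> f y = w0 \<Longrightarrow> \<exists>r>0. inj_on f (ball y r)"
  shows "f -` {w0} \<inter> frontier R = f -` {w0} \<inter> closure R"
    and "\<And>y. y \<in> closure R \<Longrightarrow> f y = w0 \<Longrightarrow> \<exists>r>0. inj_on f (ball y r) \<and> ball y r - {y} \<subseteq> R"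
proof -
  have "open R"
    using open_components[OF open_Compl_vimage_closed[OF cont \<open>closed B\<close>] R] .
  have "open \<Omega>"
    using open_components[OF _ \<Omega>(1)] \<open>closed B\<close> by (simp add: open_Compl)
  have "w0 \<notin> \<Omega>"
    using w0(1) \<open>open \<Omega>\<close> by (simp add: frontier_def interior_open)
  then show P: "f -` {w0} \<inter> frontier R = f -` {w0} \<inter> closure R"
    using \<Omega>(2) \<open>open R\<close> by (auto simp: frontier_def interior_open)
  fix y assume y: "y \<in> closure R" "f y = w0"
  have "e > 0"
    using w0(2) by auto
  obtain r0 where "r0 > 0" "inj_on f (ball y r0)"
    using locinj0 y P by blast
  moreover have "ball (f y) e - {f y} \<subseteq> - B"
    using punctured_ball_subset_if_isolated_in_frontier[OF assms(1) \<open>open \<Omega>\<close> w0] y(2)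
      in_components_subset[OF \<Omega>(1)] by blast
  moreover have "isCont f y"
    using cont by (simp add: continuous_on_eq_continuous_at)
  ultimately obtain r where "r > 0" "inj_on f (ball y r)" "ball y r - {y} \<subseteq> R"
    using punctured_ball_subset_component[OF assms(1) _ R y(1) \<open>e > 0\<close>] by blast
  then show "\<exists>r>0. inj_on f (ball y r) \<and> ball y r - {y} \<subseteq> R"
    by blast
qed

lemma frontier_fibre_over_isolated_frontier_point:
  fixes f :: "'a::euclidean_space \<Rightarrow> 'a"
  assumes "2 \<le> DIM('a)" and cont: "continuous_on UNIV f" and "closed B"
    and R: "R \<in> components (- f -` B)" "bounded R"
    and \<Omega>: "\<Omega> \<in> components (- B)" "f ` R = \<Omega>"
    and w0: "w0 \<in> frontier \<Omega>" "ball w0 e \<inter> frontier \<Omega> = {w0}"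
    and locinj0: "\<And>y. y \<in> frontier R \<Longrightarrow> f y = w0 \<Longrightarrow> \<exists>r>0. inj_on f (ball y r)"
    and N: "\<And>w. w \<in> \<Omega> \<Longrightarrow> finite (f -` {w} \<inter> R) \<and> card (f -` {w} \<inter> R) = N"
  shows "finite (f -` {w0} \<inter> frontier R) \<and> card (f -` {w0} \<inter> frontier R) = N"
    and "\<And>z. z \<in> f -` {w0} \<inter> frontier R \<Longrightarrow> \<exists>e>0. ball z e \<inter> frontier R = {z}"
proof -
  note P = frontier_fibre_locally_in_component(1)[OF assms(1) cont \<open>closed B\<close> R(1) \<Omega> w0 locinj0]
  note loc0 = frontier_fibre_locally_in_component(2)[OF assms(1) cont \<open>closed B\<close> R(1) \<Omega> w0 locinj0]
  show "\<exists>e>0. ball z e \<inter> frontier R = {z}" if z: "z \<in> f -` {w0} \<inter> frontier R" for z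
  proof -
    obtain r where "r > 0" "ball z r - {z} \<subseteq> R"
      using loc0 z P by blast
    moreover have "R \<inter> frontier R = {}"
      using open_components[OF open_Compl_vimage_closed[OF cont \<open>closed B\<close>] R(1)]
      by (simp add: frontier_def interior_open)
    ultimately show ?thesis
      using z by (intro exI[of _ r]) auto
  qed
  have "open \<Omega>"
    using open_components[OF _ \<Omega>(1)] \<open>closed B\<close> by (simp add: open_Compl)
  have "e > 0"
    using w0(2) by auto
  have "\<forall>\<^sub>F w' in at w0. w' \<in> \<Omega>"
    using punctured_ball_subset_if_isolated_in_frontier[OF assms(1) \<open>open \<Omega>\<close> w0] \<open>e > 0\<close>
    unfolding eventually_at by (intro exI[of _ e]) (auto simp: dist_commute subset_iff)
  moreover have "\<forall>\<^sub>F w' in at w0. finite (f -` {w'} \<inter> R) \<and> card (f -` {w'} \<inter> R) = card (f -` {w0} \<inter> closure R)"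
    using cont compact_closure[THEN iffD2, OF R(2)] closure_subset
    by (rule eventually_card_fibre_eq) (use loc0 in blast)
  ultimately have "\<forall>\<^sub>F w' in at w0. w' \<in> \<Omega> \<and> card (f -` {w'} \<inter> R) = card (f -` {w0} \<inter> closure R)"
    by eventually_elim blast
  then obtain w' where "w' \<in> \<Omega>" "card (f -` {w'} \<inter> R) = card (f -` {w0} \<inter> closure R)"
    using eventually_happens'[OF at_neq_bot] by blast
  then have "card (f -` {w0} \<inter> closure R) = N"
    using N by simp
  moreover have "finite (f -` {w0} \<inter> closure R)"
    using continuous_on_subset[OF cont subset_UNIV] compact_closure[THEN iffD2, OF R(2)]
    by (rule finite_fibre_if_locally_injective) (use loc0 in blast)
  ultimately show "finite (f -` {w0} \<inter> frontier R) \<and> card (f -` {w0} \<inter> frontier R) = N"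
    using P by simp
qed

lemma Val_eq_if_card_fibres_eq:
  assumes "\<Omega> \<noteq> {}" "\<And>w. w \<in> \<Omega> \<Longrightarrow> finite (f -` {w} \<inter> R) \<and> card (f -` {w} \<inter> R) = N"
  shows "Val f R \<Omega> = enat N"
proof -
  have "ecount {z \<in> R. f z = w} = enat N" if "w \<in> \<Omega>" for w
  proof -
    have "{z \<in> R. f z = w} = f -` {w} \<inter> R"
      by auto
    then show ?thesis
      using assms(2)[OF that] by (simp add: ecount_def)
  qed
  then have "Val f R \<Omega> = (SUP w\<in>\<Omega>. enat N)"
    unfolding Val_def by (rule SUP_cong[OF refl])
  then show ?thesis
    using assms(1) by simp
qed

theorem lemma5p15:
  fixes f :: "complex \<Rightarrow> complex" and R \<Omega> :: "complex set" and w0 :: complex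
  assumes "harmonic_complex f"
    and "light f"
    and "R \<in> components (UNIV - f -` (f ` critset f \<union> cluster_inf f))"
    and "bounded R"
    and "\<Omega> \<in> components (UNIV - (f ` critset f \<union> cluster_inf f))"
    and "f ` R = \<Omega>"
    and "w0 \<in> frontier \<Omega>"
    and "\<exists>e>0. ball w0 e \<inter> frontier \<Omega> = {w0}"
    and "f -` {w0} \<inter> frontier R \<inter> critset f = {}"
  shows "ecount (f -` {w0} \<inter> frontier R) = Val f R \<Omega>
    \<and> (\<forall>z \<in> f -` {w0} \<inter> frontier R. \<exists>e>0. ball z e \<inter> frontier R = {z})"
proof -
  define B where "B = f ` critset f \<union> cluster_inf f"
  have cont: "continuous_on UNIV f"
    using assms(1) by (rule continuous_on_harmonic_complex)
  have "closed B"
    unfolding B_def using cont closed_critset[OF assms(1)] by (rule closed_image_Un_cluster_inf)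
  have R: "R \<in> components (- f -` B)" and \<Omega>: "\<Omega> \<in> components (- B)"
    using assms(3,5) by (simp_all add: B_def Compl_eq_Diff_UNIV)
  have locinj: "\<exists>r>0. inj_on f (ball x r)" if "f x \<notin> B" for x
    using that harmonic_complex_locally_injective[OF assms(1)] by (auto simp: B_def)
  obtain N where N: "\<And>w. w \<in> \<Omega> \<Longrightarrow> finite (f -` {w} \<inter> R) \<and> card (f -` {w} \<inter> R) = N"
    using card_fibre_constant_on_component[OF cont \<open>closed B\<close> locinj R assms(4) \<Omega>] by blast
  obtain e where e: "ball w0 e \<inter> frontier \<Omega> = {w0}"
    using assms(8) by blast
  have locinj0: "\<exists>r>0. inj_on f (ball y r)" if "y \<in> frontier R" "f y = w0" for y
    using that assms(9) harmonic_complex_locally_injective[OF assms(1)] by blast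
  have "2 \<le> DIM(complex)"
    by simp
  note frontier_fibre = frontier_fibre_over_isolated_frontier_point
    [OF this cont \<open>closed B\<close> R assms(4) \<Omega> assms(6,7) e locinj0 N]
  have "Val f R \<Omega> = enat N"
    using in_components_nonempty[OF \<Omega>] N by (rule Val_eq_if_card_fibres_eq)
  then show ?thesis
    using frontier_fibre by (simp add: ecount_def)
qed

end
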